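(* Let $X$ be a bounded subset of $\mathbb{R}^n$ and $\hat X$ a finite subset of $\mathbb{R}^n$. Let $v:X\to\mathbb{R}$ be Lipschitz continuous with constant $L_v$ with respect to the Euclidean norm, and let $a\geq L_v$. Let $\mathcal Z_{\hat X}$ be the complete semimodule of $\overline{\mathbb{R}}_{\max}^X$ generated by the functions $z_{\hat x}(x)=-a\|x-\hat x\|_1$ ($x\in X$), $\hat x\in\hat X$. Then \[ \|v-P^{-(\mathcal Z_{\hat X})}v\|_\infty\leq n(a+L_v)\rho_X(\hat X). \]
   Context: $\|x\|_1=\sum_i|x_i|$. $\rho_X(P)=\sup_{x\in X}\inf_{p\in P}\|x-p\|_2$. $P^{-(\mathcal Z_{\hat X})}v=\min\{g\in -\mathcal Z_{\hat X}: g\geq v\}$, explicitly $P^{-(\mathcal Z_{\hat X})}v(x)=\inf_{\hat x\in\hat X}\big(a\|x-\hat x\|_1+\sup_{y\in X}(-a\|y-\hat x\|_1+v(y))\big)$ for $x\in X$. $\|g\|_\infty=\sup_{x\in X}|g(x)|$. *)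

theory Defs
  imports "HOL-Analysis.Analysis"
begin

definition norm1 :: "real ^ 'n \<Rightarrow> real" where
  "norm1 x = (\<Sum>i\<in>UNIV. \<bar>x $ i\<bar>)"

definition covrad :: "(real ^ 'n) set \<Rightarrow> (real ^ 'n) set \<Rightarrow> real" where
  "covrad X P = (SUP x\<in>X. INF p\<in>P. dist x p)"

text \<open>The max-plus projection P^{-(Z_Xhat)} v onto the (negated) complete semimodule generated
  by z_xhat(x) = -a ||x - xhat||_1, given by its explicit formula, for x in X.\<close>
definition proj_minus :: "real \<Rightarrow> (real ^ 'n) set \<Rightarrow> (real ^ 'n) set \<Rightarrow> (real ^ 'n \<Rightarrow> real)
    \<Rightarrow> real ^ 'n \<Rightarrow> real" where
  "proj_minus a X Xh v x =
     (INF xh\<in>Xh. a * norm1 (x - xh) + (SUP y\<in>X. - a * norm1 (y - xh) + v y))"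

definition supnorm_on :: "(real ^ 'n) set \<Rightarrow> (real ^ 'n \<Rightarrow> real) \<Rightarrow> real" where
  "supnorm_on X g = (SUP x\<in>X. \<bar>g x\<bar>)"

end

theory Submission
  imports Defs
begin

text \<open>Every generator term \<open>a \<parallel>x - x\<^sub>h\<parallel>\<^sub>1 + sup\<^sub>y (v y - a \<parallel>y - x\<^sub>h\<parallel>\<^sub>1)\<close> dominates
  \<open>v x\<close> (take \<open>y = x\<close>), so the projection lies above \<open>v\<close>. Conversely, since \<open>v\<close> is
  \<open>L\<^sub>v\<close>-Lipschitz also for the larger 1-norm and \<open>a \<ge> L\<^sub>v\<close>, the supremum is at most
  \<open>v x + L\<^sub>v \<parallel>x - x\<^sub>h\<parallel>\<^sub>1\<close>; choosing \<open>x\<^sub>h\<close> nearest to \<open>x\<close> and using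
  \<open>\<parallel>\<cdot>\<parallel>\<^sub>1 \<le> n \<parallel>\<cdot>\<parallel>\<^sub>2\<close> bounds the projection by \<open>v x + n (a + L\<^sub>v) \<rho>\<^sub>X(X\<^sub>h)\<close>.\<close>

lemma norm1_triangle: "norm1 (x + y) \<le> norm1 x + norm1 y"
  unfolding norm1_def by (simp add: sum.distrib[symmetric] sum_mono abs_triangle_ineq)

lemma norm1_minus_commute: "norm1 (x - y) = norm1 (y - x)"
  unfolding norm1_def by (simp add: abs_minus_commute)

lemma norm1_nonneg: "norm1 x \<ge> 0"
  unfolding norm1_def by (simp add: sum_nonneg)

lemma norm_le_norm1: "norm x \<le> norm1 x"
  unfolding norm1_def by (rule norm_le_l1_cart)

lemma norm1_le_card_norm: "norm1 (x :: real ^ 'n) \<le> real CARD('n) * norm x"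
proof -
  have "norm1 x \<le> (\<Sum>i\<in>(UNIV::'n set). norm x)"
    unfolding norm1_def by (intro sum_mono component_le_norm_cart)
  then show ?thesis by simp
qed

lemma norm1_diff_triangle: "norm1 (y - x) \<le> norm1 (y - z) + norm1 (x - z)"
  using norm1_triangle[of "y - z" "z - x"] by (simp add: norm1_minus_commute[of z x])

lemma lipschitz_on_le_norm1:
  assumes "L-lipschitz_on X v" "x \<in> X" "y \<in> X"
  shows "v y \<le> v x + L * norm1 (y - x)"
proof -
  have "v y - v x \<le> L * dist y x"
    using lipschitz_onD[OF assms(1) assms(3,2)] by (simp add: dist_real_def)
  also have "\<dots> \<le> L * norm1 (y - x)"
    using lipschitz_on_nonneg[OF assms(1)] by (simp add: dist_norm norm_le_norm1 mult_left_mono)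
  finally show ?thesis by simp
qed

lemma proj_term_le:
  assumes "L-lipschitz_on X v" "L \<le> a" "x \<in> X" "y \<in> X"
  shows "- a * norm1 (y - xh) + v y \<le> v x + L * norm1 (x - xh)"
proof -
  have "v y \<le> v x + L * norm1 (y - x)"
    using lipschitz_on_le_norm1[OF assms(1,3,4)] .
  also have "\<dots> \<le> v x + L * (norm1 (y - xh) + norm1 (x - xh))"
    using lipschitz_on_nonneg[OF assms(1)] by (simp add: mult_left_mono norm1_diff_triangle)
  also have "\<dots> \<le> v x + a * norm1 (y - xh) + L * norm1 (x - xh)"
    using assms(2) norm1_nonneg[of "y - xh"] by (simp add: distrib_left mult_right_mono)
  finally show ?thesis by simp
qed

lemma proj_sup_ge:
  assumes "L-lipschitz_on X v" "L \<le> a" "x \<in> X"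
  shows "- a * norm1 (x - xh) + v x \<le> (SUP y\<in>X. - a * norm1 (y - xh) + v y)"
proof (rule cSUP_upper[OF assms(3)])
  show "bdd_above ((\<lambda>y. - a * norm1 (y - xh) + v y) ` X)"
    using proj_term_le[OF assms] by (intro bdd_aboveI2)
qed

lemma proj_sup_le:
  assumes "L-lipschitz_on X v" "L \<le> a" "x \<in> X"
  shows "(SUP y\<in>X. - a * norm1 (y - xh) + v y) \<le> v x + L * norm1 (x - xh)"
  using assms(3) proj_term_le[OF assms] by (intro cSUP_least) auto

lemma proj_minus_ge:
  assumes "L-lipschitz_on X v" "L \<le> a" "Xh \<noteq> {}" "x \<in> X"
  shows "v x \<le> proj_minus a X Xh v x"
  unfolding proj_minus_def using assms(3) proj_sup_ge[OF assms(1,2,4)]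
  by (intro cINF_greatest) (auto simp: algebra_simps)

lemma proj_minus_le:
  assumes "L-lipschitz_on X v" "L \<le> a" "xh \<in> Xh" "x \<in> X"
  shows "proj_minus a X Xh v x \<le> v x + (a + L) * norm1 (x - xh)"
proof -
  have "proj_minus a X Xh v x \<le> a * norm1 (x - xh) + (SUP y\<in>X. - a * norm1 (y - xh) + v y)"
    unfolding proj_minus_def using assms(3) proj_sup_ge[OF assms(1,2,4)]
    by (intro cINF_lower bdd_belowI2[where m = "v x"]) (auto simp: algebra_simps)
  also have "\<dots> \<le> v x + (a + L) * norm1 (x - xh)"
    using proj_sup_le[OF assms(1,2,4), of xh] by (simp add: algebra_simps)
  finally show ?thesis .
qed

lemma covrad_eq_SUP_infdist: "Xh \<noteq> {} \<Longrightarrow> covrad X Xh = (SUP x\<in>X. infdist x Xh)"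
  unfolding covrad_def infdist_def by simp

lemma infdist_le_covrad:
  assumes "bounded X" "Xh \<noteq> {}" "x \<in> X"
  shows "infdist x Xh \<le> covrad X Xh"
proof -
  obtain p where p: "p \<in> Xh" using assms(2) by blast
  obtain r where r: "\<And>y. y \<in> X \<Longrightarrow> dist p y \<le> r"
    using assms(1) bounded_any_center by metis
  have "infdist y Xh \<le> r" if "y \<in> X" for y
    using infdist_le[OF p, of y] r[OF that] by (simp add: dist_commute)
  then have "bdd_above ((\<lambda>y. infdist y Xh) ` X)" by (intro bdd_aboveI2)
  then show ?thesis
    unfolding covrad_eq_SUP_infdist[OF assms(2)] by (rule cSUP_upper[OF assms(3)])
qed

theorem lemma5p10:
  fixes X Xh :: "(real ^ 'n) set" and v :: "real ^ 'n \<Rightarrow> real" and Lv a :: real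
  assumes "bounded X" and "X \<noteq> {}"
    and "finite Xh" and "Xh \<noteq> {}"
    and "Lv-lipschitz_on X v"
    and "a \<ge> Lv"
  shows "supnorm_on X (\<lambda>x. v x - proj_minus a X Xh v x)
           \<le> real CARD('n) * (a + Lv) * covrad X Xh"
  unfolding supnorm_on_def
proof (rule cSUP_least[OF assms(2)])
  fix x assume x: "x \<in> X"
  obtain xh where xh: "xh \<in> Xh" "dist x xh = infdist x Xh"
    using infdist_attains_inf[OF finite_imp_closed[OF assms(3)] assms(4)] by metis
  have "a + Lv \<ge> 0"
    using lipschitz_on_nonneg[OF assms(5)] assms(6) by linarith
  have "norm1 (x - xh) \<le> real CARD('n) * dist x xh"
    using norm1_le_card_norm[of "x - xh"] by (simp add: dist_norm)
  also have "\<dots> \<le> real CARD('n) * covrad X Xh"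
    using infdist_le_covrad[OF assms(1,4) x] xh(2) by (simp add: mult_left_mono)
  finally have "norm1 (x - xh) \<le> real CARD('n) * covrad X Xh" .
  from mult_left_mono[OF this \<open>a + Lv \<ge> 0\<close>]
  have "(a + Lv) * norm1 (x - xh) \<le> real CARD('n) * (a + Lv) * covrad X Xh"
    by (simp only: ac_simps)
  then show "\<bar>v x - proj_minus a X Xh v x\<bar> \<le> real CARD('n) * (a + Lv) * covrad X Xh"
    using proj_minus_ge[OF assms(5,6,4) x] proj_minus_le[OF assms(5,6) xh(1) x] by linarith
qed

end
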